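(* Let $m$ be an integer and suppose $m=N_2(1+(x-1)^3h(x))$ for some $h\in\mathbb Z[x]$. Then there is $k\in\mathbb Z[x]$ with $m=N_1(1+(x-1)^3k(x))$, where $5\nmid k(1)$ if $5\nmid h(1)$, and $5\mid k(1)$ if $5\mid h(1)$.
   Context: For $j\geq1$, $\omega_j=e^{2\pi i/5^j}$ and $N_j(F)=\prod_{1\leq \ell\leq 5^j,\ 5\nmid \ell}F(\omega_j^\ell)$. *)

theory Defs
  imports "HOL-Complex_Analysis.Complex_Analysis" "HOL-Computational_Algebra.Polynomial"
begin

definition omega :: "nat \<Rightarrow> complex" where
  "omega j = exp (2 * pi * \<i> / of_nat (5 ^ j))"

definition Nnorm :: "nat \<Rightarrow> int poly \<Rightarrow> complex" where
  "Nnorm j F = (\<Prod>l \<in> {l. 1 \<le> l \<and> l \<le> 5 ^ j \<and> \<not> 5 dvd l}.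
                  poly (map_poly of_int F) (omega j ^ l))"

end

theory Submission
  imports Defs "HOL-Computational_Algebra.Primes"
begin

(* Write F(x) = \<Sum>r<5. x^r F_r(x^5). Over a primitive fifth root of unity z, the product of the
   F(z^j x) is G(x^5), where G is the norm form of the pure quintic extension evaluated at the
   sections F_r. Splitting the exponents as l = a + 5i gives N_2(F) = N_1(G). Modulo 5 the norm
   form reduces to \<Sum>r<5. x^r F_r^5, which is congruent to F by Frobenius, so G = F + 5W.
   Finally N_1 only sees G modulo the cyclotomic polynomial \<Phi>_5, and modulo \<Phi>_5 the number 5
   equals -(x-1)^3 (x + 2x^2 + 2x^3), whose cofactor takes the value 5 at 1; so G may be replaced
   by 1 + (x-1)^3 k with k(1) = h(1) - 5 W(1). *)

lemma prime_dvd_power_add_sub: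
  fixes x y :: "'a::comm_ring_1"
  assumes "prime p"
  shows "of_nat p dvd (x + y) ^ p - x ^ p - y ^ p"
proof -
  have "0 < p" using assms prime_gt_0_nat by blast
  have "(x + y) ^ p = (\<Sum>k\<le>p. of_nat (p choose k) * x ^ k * y ^ (p - k))"
    by (rule binomial_ring)
  also have "\<dots> = x ^ p + y ^ p + (\<Sum>k\<in>{1..<p}. of_nat (p choose k) * x ^ k * y ^ (p - k))"
  proof -
    have "{..p} = insert p (insert 0 {1..<p})" using \<open>0 < p\<close> by auto
    then show ?thesis using \<open>0 < p\<close> by (simp add: add_ac)
  qed
  finally have "(x + y) ^ p - x ^ p - y ^ p = (\<Sum>k\<in>{1..<p}. of_nat (p choose k) * x ^ k * y ^ (p - k))"
    by (simp add: algebra_simps)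
  also have "of_nat p dvd \<dots>"
  proof (intro dvd_sum dvd_mult2)
    fix k assume "k \<in> {1..<p}"
    then have "p dvd p choose k" using assms by (intro dvd_choose_prime) auto
    then show "of_nat p dvd (of_nat (p choose k) :: 'a)" by (metis dvd_def of_nat_mult)
  qed
  finally show ?thesis .
qed

lemma prime_dvd_power_sub_self:
  fixes a :: int
  assumes "prime p"
  shows "int p dvd a ^ p - a"
proof (induction a rule: int_induct[where k = 0])
  case base
  then show ?case using assms prime_gt_0_nat by (simp add: power_0_left)
next
  case (step1 a)
  have "(a + 1) ^ p - (a + 1) = ((a + 1) ^ p - a ^ p - 1 ^ p) + (a ^ p - a)" by simp
  then show ?case using step1.IH prime_dvd_power_add_sub[OF assms, of a 1] by (metis dvd_add)
next
  case (step2 a)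
  have "(a - 1) ^ p - (a - 1) = (a ^ p - a) - ((a - 1 + 1) ^ p - (a - 1) ^ p - 1 ^ p)" by simp
  then show ?case using step2.IH prime_dvd_power_add_sub[OF assms, of "a - 1" 1] by (metis dvd_diff)
qed

lemma prime_dvd_power_sub_pcompose:
  fixes P :: "int poly"
  assumes "prime p"
  shows "of_nat p dvd P ^ p - P \<circ>\<^sub>p [:0, 1:] ^ p"
proof (induction P)
  case 0
  then show ?case using assms prime_gt_0_nat by (simp add: power_0_left)
next
  case (pCons a P)
  let ?X = "[:0, 1:] :: int poly"
  have const: "of_nat p dvd [:a:] ^ p - [:a:]"
  proof -
    obtain d where "a ^ p - a = int p * d" using prime_dvd_power_sub_self[OF assms] by blast
    then have "[:a:] ^ p - [:a:] = of_nat p * [:d:]" by (simp add: of_nat_poly poly_const_pow)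
    then show ?thesis by (metis dvd_triv_left)
  qed
  have "pCons a P = [:a:] + ?X * P" by simp
  then have "pCons a P ^ p - pCons a P \<circ>\<^sub>p ?X ^ p
      = ([:a:] + ?X * P) ^ p - ([:a:] + ?X ^ p * P \<circ>\<^sub>p ?X ^ p)"
    by (metis pcompose_pCons)
  also have "\<dots> = (([:a:] + ?X * P) ^ p - [:a:] ^ p - (?X * P) ^ p) + ([:a:] ^ p - [:a:])
        + ?X ^ p * (P ^ p - P \<circ>\<^sub>p ?X ^ p)"
    by (simp only: power_mult_distrib) algebra
  also have "of_nat p dvd \<dots>"
    by (intro dvd_add prime_dvd_power_add_sub[OF assms] const dvd_mult pCons.IH)
  finally show ?case .
qed

definition poly_section :: "nat \<Rightarrow> nat \<Rightarrow> 'a::zero poly \<Rightarrow> 'a poly" where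
  "poly_section q r F = Poly (map (\<lambda>i. coeff F (q * i + r)) [0..<Suc (degree F)])"

lemma coeff_poly_section:
  assumes "0 < q"
  shows "coeff (poly_section q r F) i = coeff F (q * i + r)"
proof (cases "i \<le> degree F")
  case False
  moreover have "i \<le> q * i + r" using assms by (simp add: trans_le_add1)
  ultimately show ?thesis
    by (simp add: poly_section_def nth_default_def coeff_eq_0)
qed (simp add: poly_section_def nth_default_def nth_append less_Suc_eq_le)

lemma degree_poly_section_le:
  assumes "0 < q"
  shows "degree (poly_section q r F) \<le> degree F"
proof (intro degree_le allI impI)
  fix i assume "degree F < i"
  moreover have "i \<le> q * i + r" using assms by (simp add: trans_le_add1)
  ultimately show "coeff (poly_section q r F) i = 0"
    by (simp add: assms coeff_poly_section coeff_eq_0)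
qed

lemma map_poly_poly_section:
  "f 0 = 0 \<Longrightarrow> 0 < q \<Longrightarrow> map_poly f (poly_section q r F) = poly_section q r (map_poly f F)"
  by (rule poly_eqI) (simp add: coeff_map_poly coeff_poly_section)

lemma poly_eq_sum_lessThan:
  fixes x :: "'a::comm_semiring_1"
  assumes "degree p < n"
  shows "poly p x = (\<Sum>i<n. coeff p i * x ^ i)"
  unfolding poly_altdef using assms
  by (intro sum.mono_neutral_left) (auto simp: coeff_eq_0)

lemma poly_eq_sum_poly_section:
  fixes t :: "'a::comm_semiring_1"
  assumes "0 < q"
  shows "poly F t = (\<Sum>r<q. t ^ r * poly (poly_section q r F) (t ^ q))"
proof -
  define N where "N = Suc (degree F)"
  have "N \<le> N * q" using assms by simp
  then have "degree F < N * q" by (simp add: N_def)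
  then have "poly F t = (\<Sum>n<N * q. coeff F n * t ^ n)" by (rule poly_eq_sum_lessThan)
  also have "\<dots> = (\<Sum>i<N. \<Sum>n\<in>{i * q..<i * q + q}. coeff F n * t ^ n)"
    by (rule sum.nat_group[symmetric])
  also have "\<dots> = (\<Sum>i<N. \<Sum>r<q. coeff F (q * i + r) * t ^ (q * i + r))"
  proof (rule sum.cong[OF refl])
    fix i
    show "(\<Sum>n\<in>{i * q..<i * q + q}. coeff F n * t ^ n) = (\<Sum>r<q. coeff F (q * i + r) * t ^ (q * i + r))"
      using sum.atLeastLessThan_shift_0[of "\<lambda>n. coeff F n * t ^ n" "i * q" "i * q + q"]
      by (simp add: lessThan_atLeast0 comp_def mult.commute[of i q])
  qed
  also have "\<dots> = (\<Sum>r<q. t ^ r * (\<Sum>i<N. coeff (poly_section q r F) i * (t ^ q) ^ i))"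
    by (subst sum.swap) (simp add: sum_distrib_left coeff_poly_section assms power_add mult_ac flip: power_mult)
  also have "\<dots> = (\<Sum>r<q. t ^ r * poly (poly_section q r F) (t ^ q))"
  proof (rule sum.cong[OF refl])
    fix r
    have "degree (poly_section q r F) < N"
      using degree_poly_section_le[OF assms, of r F] by (simp add: N_def)
    then show "t ^ r * (\<Sum>i<N. coeff (poly_section q r F) i * (t ^ q) ^ i)
        = t ^ r * poly (poly_section q r F) (t ^ q)"
      by (simp add: poly_eq_sum_lessThan)
  qed
  finally show ?thesis .
qed

lemma poly_section_decomposition:
  fixes F :: "'a::comm_semiring_1 poly"
  assumes "0 < q"
  shows "F = (\<Sum>r<q. [:0, 1:] ^ r * poly_section q r F \<circ>\<^sub>p [:0, 1:] ^ q)"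
proof -
  have "F = poly (map_poly (\<lambda>c. [:c:]) F) [:0, 1:]" by (simp flip: pcompose_altdef)
  also have "\<dots> = (\<Sum>r<q. [:0, 1:] ^ r * poly_section q r F \<circ>\<^sub>p [:0, 1:] ^ q)"
    by (simp add: poly_eq_sum_poly_section assms map_poly_poly_section pcompose_altdef)
  finally show ?thesis .
qed

(* norm5 a0 a1 a2 a3 a4 y is the norm of a0 + a1 \<theta> + ... + a4 \<theta>^4 where \<theta>^5 = y; apart from the
   diagonal terms every coefficient is a multiple of 5, which is collected in norm5_cross. *)
definition norm5_cross :: "'a::comm_ring_1 \<Rightarrow> 'a \<Rightarrow> 'a \<Rightarrow> 'a \<Rightarrow> 'a \<Rightarrow> 'a \<Rightarrow> 'a" where
 "norm5_cross a0 a1 a2 a3 a4 y = - a2*a3^3*a4*y^3 + a2^2*a3*a4^2*y^3 + a1*a3^2*a4^2*y^3 - a1*a2*a4^3*y^3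
   - a1*a2^3*a3*y^2 + a1^2*a2*a3^2*y^2 + a1^2*a2^2*a4*y^2 - a1^3*a3*a4*y^2 - a0*a3*a4^3*y^3
   + a0*a2^2*a3^2*y^2 - a0*a2^3*a4*y^2 - a0*a1*a3^3*y^2 - a0*a1*a2*a3*a4*y^2 + a0*a1^2*a4^2*y^2
   - a0*a1^3*a2*y + a0^2*a3^2*a4*y^2 + a0^2*a2*a4^2*y^2 + a0^2*a1*a2^2*y + a0^2*a1^2*a3*y
   - a0^3*a2*a3*y - a0^3*a1*a4*y"

definition norm5 :: "'a::comm_ring_1 \<Rightarrow> 'a \<Rightarrow> 'a \<Rightarrow> 'a \<Rightarrow> 'a \<Rightarrow> 'a \<Rightarrow> 'a" where
 "norm5 a0 a1 a2 a3 a4 y =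
    a0^5 + y*a1^5 + y^2*a2^5 + y^3*a3^5 + y^4*a4^5 + 5 * norm5_cross a0 a1 a2 a3 a4 y"

lemma norm5_homogeneous:
  fixes t a0 a1 a2 a3 a4 :: "'a::idom"
  shows "norm5 a0 (t*a1) (t^2*a2) (t^3*a3) (t^4*a4) 1 = norm5 a0 a1 a2 a3 a4 (t^5)"
  unfolding norm5_def norm5_cross_def power_one mult_1_right mult_1_left by algebra

lemma cyclotomic5_root_power5:
  fixes z :: "'a::comm_ring_1"
  assumes "1 + z + z^2 + z^3 + z^4 = 0"
  shows "z^5 = 1"
proof -
  have "z^5 - 1 = (z - 1) * (1 + z + z^2 + z^3 + z^4)" by (simp add: algebra_simps eval_nat_numeral)
  then show ?thesis using assms by simp
qed

lemma gauss_periods5: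
  fixes z :: "'a::comm_ring_1"
  assumes phi: "1 + z + z^2 + z^3 + z^4 = 0"
  shows "(z + z^4) + (z^2 + z^3) = -1" and "(z + z^4) * (z^2 + z^3) = -1"
proof -
  show "(z + z^4) + (z^2 + z^3) = -1"
    using phi by (simp add: algebra_simps eq_neg_iff_add_eq_0)
  have "(z + z^4) * (z^2 + z^3) = z^5 * (z + z^2) + z^3 + z^4"
    by (simp add: algebra_simps eval_nat_numeral)
  then show "(z + z^4) * (z^2 + z^3) = -1"
    using cyclotomic5_root_power5[OF phi] phi by (simp add: algebra_simps eq_neg_iff_add_eq_0)
qed

lemma norm5_circulant:
  fixes z b0 b1 b2 b3 b4 :: "'a::idom"
  assumes phi: "1 + z + z^2 + z^3 + z^4 = 0"
  shows "(b0 + b1 + b2 + b3 + b4) * (b0 + z*b1 + z^2*b2 + z^3*b3 + z^4*b4)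
     * (b0 + z^2*b1 + z^4*b2 + z*b3 + z^3*b4) * (b0 + z^3*b1 + z*b2 + z^4*b3 + z^2*b4)
     * (b0 + z^4*b1 + z^3*b2 + z^2*b3 + z*b4) = norm5 b0 b1 b2 b3 b4 1"
proof -
  have z5: "z^5 = 1" using phi by (rule cyclotomic5_root_power5)
  define A where "A = b0^2 + b1^2 + b2^2 + b3^2 + b4^2"
  define B where "B = b0*b1 + b1*b2 + b2*b3 + b3*b4 + b4*b0"
  define C where "C = b0*b2 + b1*b3 + b2*b4 + b3*b0 + b4*b1"
  define p1 where "p1 = z + z^4"
  define p2 where "p2 = z^2 + z^3"
  have sum_periods: "p1 + p2 = -1" and prod_periods: "p1 * p2 = -1"
    using gauss_periods5[OF phi] by (simp_all add: p1_def p2_def)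
  have "(b0 + z*b1 + z^2*b2 + z^3*b3 + z^4*b4) * (b0 + z^4*b1 + z^3*b2 + z^2*b3 + z*b4)
      = A + p1*B + p2*C + (z^5 - 1) * (b4^2 + b3^2 + b2^2 + b1^2 + z*b3*b4 + z*b2*b3 + z*b1*b2
          + z^2*b2*b4 + z^2*b1*b3 + z^3*b1*b4)"
    unfolding A_def B_def C_def p1_def p2_def by algebra
  then have conj14: "(b0 + z*b1 + z^2*b2 + z^3*b3 + z^4*b4) * (b0 + z^4*b1 + z^3*b2 + z^2*b3 + z*b4)
      = A + p1*B + p2*C"
    using z5 by simp
  have "(b0 + z^2*b1 + z^4*b2 + z*b3 + z^3*b4) * (b0 + z^3*b1 + z*b2 + z^4*b3 + z^2*b4)
      = A + p2*B + p1*C + (z^5 - 1) * (b4^2 + b3^2 + b2^2 + b1^2 + z*b2*b4 + z*b1*b4 + z*b1*b3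
          + z^2*b3*b4 + z^2*b1*b2 + z^3*b2*b3)"
    unfolding A_def B_def C_def p1_def p2_def by algebra
  then have conj23: "(b0 + z^2*b1 + z^4*b2 + z*b3 + z^3*b4) * (b0 + z^3*b1 + z*b2 + z^4*b3 + z^2*b4)
      = A + p2*B + p1*C"
    using z5 by simp
  have "(A + p1*B + p2*C) * (A + p2*B + p1*C)
      = A^2 + (p1 + p2)*A*(B + C) + (p1*p2)*(B^2 + C^2) + ((p1 + p2)^2 - 2*(p1*p2))*B*C"
    by algebra
  also have "\<dots> = A^2 - A*(B + C) - B^2 - C^2 + 3*B*C"
    by (simp add: sum_periods prod_periods algebra_simps)
  finally have conj1423: "(A + p1*B + p2*C) * (A + p2*B + p1*C) = A^2 - A*(B + C) - B^2 - C^2 + 3*B*C" .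
  have regroup: "L0 * L1 * L2 * L3 * L4 = L0 * ((L1 * L4) * (L2 * L3))" for L0 L1 L2 L3 L4 :: 'a
    by (simp add: mult_ac)
  have "(b0 + b1 + b2 + b3 + b4) * (A^2 - A*(B + C) - B^2 - C^2 + 3*B*C) = norm5 b0 b1 b2 b3 b4 1"
    unfolding A_def B_def C_def norm5_def norm5_cross_def power_one mult_1_right mult_1_left by algebra
  then show ?thesis
    unfolding regroup conj14 conj23 conj1423 .
qed

lemma prod_conjugates_eq_norm5:
  fixes z t :: "'a::idom" and a :: "nat \<Rightarrow> 'a"
  assumes phi: "1 + z + z^2 + z^3 + z^4 = 0"
  shows "(\<Prod>j<5. \<Sum>r<5. (z^j * t)^r * a r) = norm5 (a 0) (a 1) (a 2) (a 3) (a 4) (t^5)"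
proof -
  have z5: "z^5 = 1" using phi by (rule cyclotomic5_root_power5)
  have power_mod5: "z^n = z^(n mod 5)" for n
    by (metis div_mult_mod_eq power_add power_mult power_one z5 mult.commute mult_1)
  define b where "b r = t^r * a r" for r
  have "(\<Prod>j<5. \<Sum>r<5. (z^j * t)^r * a r) = (\<Prod>j<5. \<Sum>r<5. z^((j * r) mod 5) * b r)"
    by (intro prod.cong sum.cong refl)
      (simp add: b_def power_mult_distrib power_mult power_mod5[of "j * r" for j r, symmetric])
  also have "\<dots> = (b 0 + b 1 + b 2 + b 3 + b 4) * (b 0 + z*b 1 + z^2*b 2 + z^3*b 3 + z^4*b 4)
     * (b 0 + z^2*b 1 + z^4*b 2 + z*b 3 + z^3*b 4) * (b 0 + z^3*b 1 + z*b 2 + z^4*b 3 + z^2*b 4)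
     * (b 0 + z^4*b 1 + z^3*b 2 + z^2*b 3 + z*b 4)"
    by (simp add: lessThan_nat_numeral) (simp only: ac_simps)
  also have "\<dots> = norm5 (b 0) (b 1) (b 2) (b 3) (b 4) 1"
    using phi by (rule norm5_circulant)
  also have "\<dots> = norm5 (a 0) (a 1) (a 2) (a 3) (a 4) (t^5)"
    using norm5_homogeneous[of "a 0" t "a 1" "a 2" "a 3" "a 4"] by (simp add: b_def)
  finally show ?thesis .
qed

definition graeffe5 :: "'a::comm_ring_1 poly \<Rightarrow> 'a poly" where
  "graeffe5 F = norm5 (poly_section 5 0 F) (poly_section 5 1 F) (poly_section 5 2 F)
     (poly_section 5 3 F) (poly_section 5 4 F) [:0, 1:]"

lemma poly_graeffe5:
  fixes F :: "'a::idom poly" and z t :: 'a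
  assumes phi: "1 + z + z^2 + z^3 + z^4 = 0"
  shows "poly (graeffe5 F) (t^5) = (\<Prod>j<5. poly F (z^j * t))"
proof -
  have "(z^j * t)^5 = t^5" for j :: nat
  proof -
    have "(z^j)^5 = (z^5)^j" by (metis power_mult mult.commute)
    then show ?thesis using cyclotomic5_root_power5[OF phi] by (simp add: power_mult_distrib)
  qed
  then have "(\<Prod>j<5. poly F (z^j * t))
      = (\<Prod>j<5. \<Sum>r<5. (z^j * t)^r * poly (poly_section 5 r F) (t^5))"
    by (simp add: poly_eq_sum_poly_section[where q = 5])
  also have "\<dots> = poly (graeffe5 F) (t^5)"
    unfolding prod_conjugates_eq_norm5[OF phi]
    by (simp add: graeffe5_def norm5_def norm5_cross_def)
  finally show ?thesis by simp
qed

lemma map_poly_of_int_add: "map_poly of_int (p + q) = map_poly of_int p + map_poly of_int q"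
  by (rule poly_eqI) (simp add: coeff_map_poly)

lemma map_poly_of_int_diff: "map_poly of_int (p - q) = map_poly of_int p - map_poly of_int q"
  by (rule poly_eqI) (simp add: coeff_map_poly)

lemma map_poly_of_int_uminus: "map_poly of_int (- p) = - map_poly of_int p"
  by (rule poly_eqI) (simp add: coeff_map_poly)

lemma map_poly_of_int_mult: "map_poly of_int (p * q) = map_poly of_int p * map_poly of_int q"
  by (rule poly_eqI) (simp add: coeff_map_poly coeff_mult)

lemma map_poly_of_int_power: "map_poly of_int (p ^ n) = map_poly of_int p ^ n"
  by (induction n) (simp_all add: map_poly_of_int_mult)

lemma map_poly_of_int_numeral: "map_poly of_int (numeral n) = numeral n"
  by (simp add: numeral_poly map_poly_pCons)

lemmas map_poly_of_int_simps =
  map_poly_of_int_add map_poly_of_int_diff map_poly_of_int_uminus map_poly_of_int_mult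
  map_poly_of_int_power map_poly_of_int_numeral

lemma map_poly_of_int_graeffe5: "map_poly of_int (graeffe5 F) = graeffe5 (map_poly of_int F)"
  by (simp add: graeffe5_def norm5_def norm5_cross_def map_poly_of_int_simps
      map_poly_poly_section map_poly_pCons)

lemma graeffe5_cong_mod5: "(5 :: int poly) dvd graeffe5 F - F"
proof -
  let ?X = "[:0, 1:] :: int poly"
  let ?S = "\<lambda>r. poly_section 5 r F"
  have F: "F = (\<Sum>r<5. ?X ^ r * ?S r \<circ>\<^sub>p ?X ^ 5)"
    by (rule poly_section_decomposition) simp
  have "graeffe5 F - F = (\<Sum>r<5. ?X ^ r * (?S r ^ 5 - ?S r \<circ>\<^sub>p ?X ^ 5))
      + 5 * norm5_cross (?S 0) (?S 1) (?S 2) (?S 3) (?S 4) ?X"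
    by (subst (2) F) (simp add: graeffe5_def norm5_def lessThan_nat_numeral algebra_simps)
  also have "5 dvd \<dots>"
  proof (intro dvd_add dvd_sum dvd_triv_left dvd_mult)
    fix r
    have "prime (5 :: nat)" by simp
    then show "5 dvd ?S r ^ 5 - ?S r \<circ>\<^sub>p ?X ^ 5"
      using prime_dvd_power_sub_pcompose by fastforce
  qed
  finally show ?thesis .
qed

lemma omega_power: "omega j ^ n = exp (2 * of_real pi * \<i> * of_nat n / of_nat (5 ^ j))"
  unfolding omega_def by (simp add: mult_ac flip: exp_of_nat_mult)

lemma omega_power_eq_1_iff: "omega j ^ n = 1 \<longleftrightarrow> 5 ^ j dvd n"
  using complex_root_unity_eq[of "5 ^ j" n 0] by (simp add: omega_power dvd_eq_mod_eq_0)

lemma omega_Suc_power5: "omega (Suc j) ^ 5 = omega j"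
  unfolding omega_power by (simp add: omega_def mult_ac)

lemma omega_Suc_power_5_power: "omega (Suc j) ^ (5 ^ j) = omega 1"
proof (induction j)
  case (Suc j)
  have "omega (Suc (Suc j)) ^ 5 ^ Suc j = (omega (Suc (Suc j)) ^ 5) ^ 5 ^ j"
    by (simp add: power_mult)
  then show ?case by (simp add: omega_Suc_power5 Suc.IH)
qed simp

lemma cyclotomic5_omega1_power:
  assumes "\<not> 5 dvd l"
  shows "1 + omega 1 ^ l + (omega 1 ^ l)^2 + (omega 1 ^ l)^3 + (omega 1 ^ l)^4 = 0"
proof -
  let ?w = "omega 1 ^ l"
  have "?w ^ 5 = 1" by (simp add: omega_power_eq_1_iff flip: power_mult)
  moreover have "?w \<noteq> 1" using assms by (simp add: omega_power_eq_1_iff)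
  moreover have "?w ^ 5 - 1 = (?w - 1) * (1 + ?w + ?w^2 + ?w^3 + ?w^4)"
    by (simp add: algebra_simps eval_nat_numeral)
  ultimately show ?thesis by simp
qed

lemma bij_betw_not_dvd5_split:
  fixes M :: nat
  assumes "5 dvd M"
  shows "bij_betw (\<lambda>(a, i). a + M * i) ({a. 1 \<le> a \<and> a \<le> M \<and> \<not> 5 dvd a} \<times> {..<5})
           {l. 1 \<le> l \<and> l \<le> 5 * M \<and> \<not> 5 dvd l}"
proof -
  have dvd_add_M: "5 dvd a + M * i \<longleftrightarrow> 5 dvd a" for a i
    using assms by (simp add: dvd_add_left_iff dvd_mult2)
  have below_M: "a < M" if "a \<le> M" "\<not> 5 dvd a" for a
    using that assms by (metis le_neq_implies_less)
  have into: "a + M * i \<le> 5 * M \<and> \<not> 5 dvd a + M * i" if "a \<le> M" "\<not> 5 dvd a" "i < 5" for a i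
  proof -
    have "M * i \<le> M * 4" using that(3) by (intro mult_le_mono2) simp
    then have "a + M * i \<le> 5 * M" using that(1) by linarith
    then show ?thesis using that(2) dvd_add_M by simp
  qed
  have onto: "1 \<le> l mod M \<and> l mod M \<le> M \<and> \<not> 5 dvd l mod M \<and> l div M < 5"
    if "1 \<le> l" "l \<le> 5 * M" "\<not> 5 dvd l" for l
  proof -
    have "0 < M" using that by auto
    have "l = l mod M + M * (l div M)" by simp
    then have "\<not> 5 dvd l mod M" using that(3) dvd_add_M by metis
    moreover have "l < 5 * M" using that by (metis le_neq_implies_less dvd_triv_left)
    ultimately show ?thesis
      using \<open>0 < M\<close> by (auto simp: less_mult_imp_div_less Suc_le_eq intro: Nat.gr0I less_imp_le)
  qed
  show ?thesis
    by (rule bij_betw_byWitness[where f' = "\<lambda>l. (l mod M, l div M)"])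
      (use below_M into onto in auto)
qed

lemma Nnorm_Suc:
  assumes "1 \<le> j"
  shows "Nnorm (Suc j) F = Nnorm j (graeffe5 F)"
proof -
  let ?f = "poly (map_poly of_int F) :: complex \<Rightarrow> complex"
  let ?U = "{a. 1 \<le> a \<and> a \<le> 5 ^ j \<and> \<not> 5 dvd a}"
  have "5 dvd (5::nat) ^ j" using assms by (simp add: dvd_power)
  then have "Nnorm (Suc j) F = (\<Prod>(a, i)\<in>?U \<times> {..<5}. ?f (omega (Suc j) ^ (a + 5 ^ j * i)))"
    unfolding Nnorm_def using prod.reindex_bij_betw[OF bij_betw_not_dvd5_split, symmetric]
    by (simp add: case_prod_beta)
  also have "\<dots> = (\<Prod>a\<in>?U. \<Prod>i<5. ?f (omega 1 ^ i * omega (Suc j) ^ a))"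
  proof -
    have "omega (Suc j) ^ (a + 5 ^ j * i) = omega 1 ^ i * omega (Suc j) ^ a" for a i
      by (simp only: power_add power_mult omega_Suc_power_5_power) (rule mult.commute)
    then show ?thesis by (simp add: prod.cartesian_product)
  qed
  also have "\<dots> = (\<Prod>a\<in>?U. poly (graeffe5 (map_poly of_int F)) ((omega (Suc j) ^ a) ^ 5))"
    using cyclotomic5_omega1_power[of 1] by (simp add: poly_graeffe5)
  also have "\<dots> = Nnorm j (graeffe5 F)"
  proof -
    have "(omega (Suc j) ^ a) ^ 5 = omega j ^ a" for a
      by (metis omega_Suc_power5 power_mult mult.commute)
    then show ?thesis unfolding Nnorm_def map_poly_of_int_graeffe5 by simp
  qed
  finally show ?thesis .
qed

lemma poly_cyclotomic5:
  "poly (map_poly of_int [:1, 1, 1, 1, 1:]) w = 1 + w + w^2 + w^3 + (w::'a::comm_ring_1)^4"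
  by (simp add: map_poly_pCons algebra_simps eval_nat_numeral)

lemma Nnorm_1_eq_if_cyclotomic5_dvd:
  assumes "[:1, 1, 1, 1, 1:] dvd F - G"
  shows "Nnorm 1 F = Nnorm 1 G"
proof -
  obtain Q where "F - G = [:1, 1, 1, 1, 1:] * Q" using assms by (elim dvdE)
  then have F: "F = G + [:1, 1, 1, 1, 1:] * Q" by (simp add: algebra_simps)
  have "poly (map_poly of_int F) (omega 1 ^ l) = poly (map_poly of_int G) (omega 1 ^ l)"
    if "\<not> 5 dvd l" for l
    using cyclotomic5_omega1_power[OF that]
    unfolding F map_poly_of_int_add map_poly_of_int_mult poly_add poly_mult poly_cyclotomic5 by simp
  then show ?thesis unfolding Nnorm_def by (intro prod.cong) auto
qed

lemma cyclotomic5_dvd_five_add_cube: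
  "[:1, 1, 1, 1, 1:] dvd (5 + [:-1, 1:] ^ 3 * [:0, 1, 2, 2:] :: int poly)"
  by (rule dvdI[where k = "[:5, -6, 2:]"]) (simp add: eval_nat_numeral numeral_poly)

theorem lemma3p3:
  fixes m :: int and h :: "int poly"
  assumes "of_int m = Nnorm 2 (1 + [:-1, 1:] ^ 3 * h)"
  shows "\<exists>k :: int poly. of_int m = Nnorm 1 (1 + [:-1, 1:] ^ 3 * k)
           \<and> (\<not> 5 dvd poly h 1 \<longrightarrow> \<not> 5 dvd poly k 1)
           \<and> (5 dvd poly h 1 \<longrightarrow> 5 dvd poly k 1)"
proof -
  define C :: "int poly" where "C = [:-1, 1:] ^ 3"
  define r :: "int poly" where "r = [:0, 1, 2, 2:]"
  define F where "F = 1 + C * h"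
  obtain W where W: "graeffe5 F - F = 5 * W" using graeffe5_cong_mod5[of F] by (elim dvdE)
  define k where "k = h - r * W"
  have "graeffe5 F - (1 + C * k) = (5 + C * r) * W"
    using W by (simp add: F_def k_def algebra_simps)
  then have "[:1, 1, 1, 1, 1:] dvd graeffe5 F - (1 + C * k)"
    using cyclotomic5_dvd_five_add_cube by (simp add: C_def r_def)
  then have "of_int m = Nnorm 1 (1 + C * k)"
    using assms Nnorm_Suc[of 1 F] Nnorm_1_eq_if_cyclotomic5_dvd
    by (simp add: F_def C_def numeral_2_eq_2)
  moreover have "poly k 1 = poly h 1 - 5 * poly W 1"
    by (simp add: k_def r_def)
  then have "5 dvd poly k 1 \<longleftrightarrow> 5 dvd poly h 1"
    by presburger
  ultimately show ?thesis
    unfolding C_def by (intro exI[of _ k]) auto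
qed

end
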